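(* Let $d\ge2$ and let $P$ be an essential pattern subgroup of $G(d)$ with $P(d-1)=G(d-1)$. Then $P$ contains $[a_1,a_{d-1}]$ and does not contain $[a_0,a_{d-1}]$ if and only if $[G(d):P]=4$.
   Context: Let $X=\{0,1\}$, $G(d)$ the automorphism group of the finite binary rooted tree of words of length $\le d$; finite sections $g(wv)=g(w)g_w(v)$; $\pi_k$ restriction to words of length $\le k$, $P(k)=\pi_k(P)$. A subgroup $P\le G(d)$ is an essential pattern group if for every $p\in P$ and $i\in\{0,1\}$ there is $q\in P$ with $\pi_{d-1}(q)=p_i$. For $0\le i\le d-1$, $a_i\in G(d)$ swaps $0^i0w$ with $0^i1w$ for all words $w$ and fixes all other words. $[h,k]=h^{-1}k^{-1}hk$. *)

theory Defs
  imports "HOL-Algebra.Algebra"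
begin

text \<open>Vertices of the binary rooted tree: words over X = {0,1}, encoded as bool lists
  (False = 0, True = 1). An automorphism of the tree of words of length at most d is a
  bijection of words that preserves length and prefixes on words of length at most d;
  we normalise it to be the identity on longer words.\<close>

definition tree_aut :: "nat \<Rightarrow> (bool list \<Rightarrow> bool list) \<Rightarrow> bool" where
  "tree_aut d f \<longleftrightarrow> bij f \<and> (\<forall>w. length (f w) = length w)
     \<and> (\<forall>w. d < length w \<longrightarrow> f w = w)
     \<and> (\<forall>w v. length (w @ v) \<le> d \<longrightarrow> take (length w) (f (w @ v)) = f w)"

definition G :: "nat \<Rightarrow> (bool list \<Rightarrow> bool list) monoid" where
  "G d = \<lparr>carrier = {f. tree_aut d f}, monoid.mult = (\<lambda>f g. f \<circ> g), one = id\<rparr>"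

definition restr :: "nat \<Rightarrow> (bool list \<Rightarrow> bool list) \<Rightarrow> (bool list \<Rightarrow> bool list)" where
  "restr k g = (\<lambda>w. if length w \<le> k then g w else w)"

text \<open>Section g_w of g in G(d) at the word w (an element of G(d - |w|)):
  g(wv) = g(w) g_w(v).\<close>
definition sect :: "nat \<Rightarrow> (bool list \<Rightarrow> bool list) \<Rightarrow> bool list \<Rightarrow> (bool list \<Rightarrow> bool list)" where
  "sect d g w = (\<lambda>v. if length v \<le> d - length w then drop (length w) (g (w @ v)) else v)"

definition essential_pattern :: "nat \<Rightarrow> (bool list \<Rightarrow> bool list) set \<Rightarrow> bool" where
  "essential_pattern d P \<longleftrightarrow> subgroup P (G d) \<and>
     (\<forall>p\<in>P. \<forall>i::bool. \<exists>q\<in>P. restr (d - 1) q = sect d p [i])"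

definition a :: "nat \<Rightarrow> nat \<Rightarrow> (bool list \<Rightarrow> bool list)" where
  "a d i = (\<lambda>w. if i < length w \<and> length w \<le> d \<and> take i w = replicate i False
               then take i w @ [\<not> w ! i] @ drop (Suc i) w else w)"

definition comm :: "nat \<Rightarrow> (bool list \<Rightarrow> bool list) \<Rightarrow> (bool list \<Rightarrow> bool list) \<Rightarrow> (bool list \<Rightarrow> bool list)" where
  "comm d h k = inv\<^bsub>G d\<^esub> h \<otimes>\<^bsub>G d\<^esub> inv\<^bsub>G d\<^esub> k \<otimes>\<^bsub>G d\<^esub> h \<otimes>\<^bsub>G d\<^esub> k"

definition tree_index :: "nat \<Rightarrow> (bool list \<Rightarrow> bool list) set \<Rightarrow> nat" where
  "tree_index d P = card (rcosets\<^bsub>G d\<^esub> P)"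

end

theory Submission
  imports Defs
begin

text \<open>
  Write \<open>n = d - 1\<close>. Since \<open>P\<close> maps onto \<open>G(n)\<close>, every coset of \<open>P\<close> contains an element of
  the kernel of the restriction, i.e. a map flipping the last letter below a set \<open>S\<close> of words of
  length \<open>n\<close>; the cosets of the flips below \<open>S\<close> and \<open>T\<close> coincide iff the flip below their
  symmetric difference lies in \<open>P\<close>. Conjugating by lifts to \<open>P\<close> of elements of \<open>G(n)\<close> shows that
  whether the flip below a pair \<open>{u, v}\<close> lies in \<open>P\<close> depends only on the first position where
  \<open>u\<close> and \<open>v\<close> differ, and that no flip below a single word lies in \<open>P\<close> unless all pair flips do.
  Now \<open>[a\<^sub>0, a\<^sub>n]\<close> and \<open>[a\<^sub>1, a\<^sub>n]\<close> are the flips below pairs first differing at positions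
  0 and 1. If the former lies in \<open>P\<close>, so does every pair flip, and the index is at most 2. If only
  the latter does, the cosets are exactly those of the flips below the subsets of
  \<open>{00\<dots>0, 10\<dots>0}\<close>, four of them. If neither does, the empty set and four words \<open>u, v, u', v'\<close>,
  with \<open>u, v\<close> in one half tree and \<open>u', v'\<close> their mirror images in the other, give five cosets.
\<close>

section \<open>The group of tree automorphisms\<close>

lemma carrier_G: "f \<in> carrier (G d) \<longleftrightarrow> tree_aut d f"
  by (simp add: G_def)

lemma mult_G [simp]: "f \<otimes>\<^bsub>G d\<^esub> g = f \<circ> g"
  by (simp add: G_def)

lemma one_G [simp]: "\<one>\<^bsub>G d\<^esub> = id"
  by (simp add: G_def)

lemma tree_aut_length: "tree_aut d f \<Longrightarrow> length (f w) = length w"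
  by (simp add: tree_aut_def)

lemma tree_aut_deep: "tree_aut d f \<Longrightarrow> d < length w \<Longrightarrow> f w = w"
  by (simp add: tree_aut_def)

lemma tree_aut_take:
  "tree_aut d f \<Longrightarrow> length (w @ v) \<le> d \<Longrightarrow> take (length w) (f (w @ v)) = f w"
  by (simp add: tree_aut_def)

lemma tree_aut_bij: "tree_aut d f \<Longrightarrow> bij f"
  by (simp add: tree_aut_def)

lemma tree_aut_append:
  assumes "tree_aut d f" "length (w @ v) \<le> d"
  shows "f (w @ v) = f w @ drop (length w) (f (w @ v))"
  by (metis append_take_drop_id assms tree_aut_take)

lemma tree_aut_id: "tree_aut d id"
  by (simp add: tree_aut_def)

lemma tree_aut_comp:
  assumes f: "tree_aut d f" and g: "tree_aut d g"
  shows "tree_aut d (f \<circ> g)"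
  unfolding tree_aut_def
proof (intro conjI allI impI)
  show "bij (f \<circ> g)" using f g tree_aut_bij bij_comp by blast
  fix w :: "bool list"
  show "length ((f \<circ> g) w) = length w" using f g by (simp add: tree_aut_length)
  show "d < length w \<Longrightarrow> (f \<circ> g) w = w" using f g by (simp add: tree_aut_deep)
  fix v assume l: "length (w @ v) \<le> d"
  have e: "g (w @ v) = g w @ drop (length w) (g (w @ v))" using tree_aut_append[OF g l] .
  have "length (g w @ drop (length w) (g (w @ v))) \<le> d" using l e tree_aut_length[OF g] by metis
  then have "take (length (g w)) (f (g w @ drop (length w) (g (w @ v)))) = f (g w)"
    using tree_aut_take[OF f] by blast
  then show "take (length w) ((f \<circ> g) (w @ v)) = (f \<circ> g) w"
    using e tree_aut_length[OF g] by simp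
qed

lemma tree_aut_inv_into:
  assumes f: "tree_aut d f"
  shows "tree_aut d (inv_into UNIV f)"
  unfolding tree_aut_def
proof (intro conjI allI impI)
  have b: "bij f" using tree_aut_bij[OF f] .
  show "bij (inv_into UNIV f)" using b bij_imp_bij_inv by blast
  have fi: "\<And>w. f (inv_into UNIV f w) = w" using b by (meson bij_inv_eq_iff)
  have inv_f: "\<And>w. inv_into UNIV f (f w) = w" using b by (simp add: bij_def)
  show len: "\<And>w. length (inv_into UNIV f w) = length w" using fi tree_aut_length[OF f] by metis
  fix w :: "bool list"
  show "d < length w \<Longrightarrow> inv_into UNIV f w = w" using inv_f tree_aut_deep[OF f] by metis
  fix v assume lv: "length (w @ v) \<le> d"
  define u where "u = inv_into UNIV f (w @ v)"
  have lu: "length u = length (w @ v)" using len u_def by simp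
  have "f u = w @ v" using fi u_def by simp
  moreover have "u = take (length w) u @ drop (length w) u" by simp
  ultimately have "take (length w) (w @ v) = f (take (length w) u)"
    using tree_aut_take[OF f, of "take (length w) u" "drop (length w) u"] lu lv
    by (metis append_eq_conv_conj length_take lu)
  then have "f (take (length w) u) = w" by simp
  then show "take (length w) (inv_into UNIV f (w @ v)) = inv_into UNIV f w"
    using inv_f u_def by metis
qed

lemma group_G: "group (G d)"
proof (rule groupI)
  fix x assume "x \<in> carrier (G d)"
  then have x: "tree_aut d x" by (simp add: carrier_G)
  have "inv_into UNIV x \<circ> x = id" using tree_aut_bij[OF x] by (simp add: bij_def)
  then show "\<exists>y\<in>carrier (G d). y \<otimes>\<^bsub>G d\<^esub> x = \<one>\<^bsub>G d\<^esub>"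
    using tree_aut_inv_into[OF x] by (auto simp: carrier_G)
qed (auto simp: carrier_G tree_aut_comp tree_aut_id comp_assoc)

lemma inv_G:
  assumes "tree_aut d f"
  shows "inv\<^bsub>G d\<^esub> f = inv_into UNIV f"
proof -
  have "inv_into UNIV f \<circ> f = id" using tree_aut_bij[OF assms] by (simp add: bij_def)
  then show ?thesis
    using group.inv_equality[OF group_G] assms tree_aut_inv_into[OF assms] by (simp add: carrier_G)
qed

lemma inv_G_involution: "tree_aut d f \<Longrightarrow> f \<circ> f = id \<Longrightarrow> inv\<^bsub>G d\<^esub> f = f"
  using group.inv_equality[OF group_G, where x = f and y = f] by (simp add: carrier_G)

lemma comm_self:
  assumes h: "tree_aut d h"
  shows "comm d h h = id"
proof -
  have cancel: "inv_into UNIV h \<circ> h = id" using tree_aut_bij[OF h] by (simp add: bij_def)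
  have "comm d h h = inv_into UNIV h \<circ> (inv_into UNIV h \<circ> h) \<circ> h"
    by (simp add: comm_def inv_G[OF h] comp_assoc)
  then show ?thesis by (simp add: cancel)
qed

lemma tree_aut_restr:
  assumes f: "tree_aut (Suc n) f"
  shows "tree_aut n (restr n f)"
  unfolding tree_aut_def
proof (intro conjI allI impI)
  have b: "bij f" using tree_aut_bij[OF f] .
  have fi: "\<And>w. f (inv_into UNIV f w) = w" using b by (meson bij_inv_eq_iff)
  have li: "\<And>w. length (inv_into UNIV f w) = length w" using fi tree_aut_length[OF f] by metis
  have "restr n f \<circ> restr n (inv_into UNIV f) = id"
    by (rule ext) (simp add: restr_def li fi)
  moreover have "restr n (inv_into UNIV f) \<circ> restr n f = id"
    using b by (intro ext) (simp add: restr_def tree_aut_length[OF f] bij_def)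
  ultimately show "bij (restr n f)" using o_bij by blast
  fix w :: "bool list"
  show "length (restr n f w) = length w" by (simp add: restr_def tree_aut_length[OF f])
  show "n < length w \<Longrightarrow> restr n f w = w" by (simp add: restr_def)
  fix v assume "length (w @ v) \<le> n"
  then show "take (length w) (restr n f (w @ v)) = restr n f w"
    using tree_aut_take[OF f, of w v] by (simp add: restr_def)
qed

section \<open>Flips of the last letter\<close>

definition flip :: "nat \<Rightarrow> bool list set \<Rightarrow> bool list \<Rightarrow> bool list" where
  "flip n S w = (if length w = Suc n \<and> butlast w \<in> S then butlast w @ [\<not> last w] else w)"

lemma flip_comp: "flip n S \<circ> flip n T = flip n (sym_diff S T)"
proof (rule ext)
  fix w :: "bool list"
  show "(flip n S \<circ> flip n T) w = flip n (sym_diff S T) w"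
    by (cases w rule: rev_cases) (auto simp: flip_def)
qed

lemma flip_empty: "flip n {} = id"
  by (rule ext) (simp add: flip_def)

lemma flip_involution: "flip n S \<circ> flip n S = id"
  by (simp add: flip_comp flip_empty)

lemma tree_aut_flip: "tree_aut (Suc n) (flip n S)"
  unfolding tree_aut_def
proof (intro conjI allI impI)
  show "bij (flip n S)" using flip_involution o_bij by blast
  fix w :: "bool list"
  show "length (flip n S w) = length w" by (simp add: flip_def)
  show "Suc n < length w \<Longrightarrow> flip n S w = w" by (simp add: flip_def)
  fix v assume l: "length (w @ v) \<le> Suc n"
  show "take (length w) (flip n S (w @ v)) = flip n S w"
  proof (cases "v = []")
    case False
    then have "length w < Suc n" using l by (cases v) auto
    then show ?thesis using False by (simp add: flip_def butlast_append)
  qed (simp add: flip_def)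
qed

lemma tree_aut_last_letter:
  assumes g: "tree_aut (Suc n) g" and u: "length u = n"
  shows "\<exists>c'. g (u @ [c]) = g u @ [c']"
proof -
  have "length (drop (length u) (g (u @ [c]))) = 1" using tree_aut_length[OF g, of "u @ [c]"] u by simp
  then obtain c' where "drop (length u) (g (u @ [c])) = [c']"
    by (metis One_nat_def length_0_conv length_Suc_conv)
  then show ?thesis using tree_aut_append[OF g, of u "[c]"] u by auto
qed

lemma tree_aut_eq_flip:
  assumes g: "tree_aut (Suc n) g" and fix_n: "\<And>w. length w \<le> n \<Longrightarrow> g w = w"
  shows "g = flip n {u. length u = n \<and> g (u @ [False]) = u @ [True]}"
proof (rule ext)
  fix w :: "bool list"
  show "g w = flip n {u. length u = n \<and> g (u @ [False]) = u @ [True]} w"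
  proof (cases "length w = Suc n")
    case False
    then have "length w \<le> n \<or> Suc n < length w" by linarith
    then show ?thesis using False fix_n tree_aut_deep[OF g] by (auto simp add: flip_def)
  next
    case True
    obtain u b where w: "w = u @ [b]" and u: "length u = n"
      using True by (metis append_butlast_last_id length_butlast length_greater_0_conv zero_less_Suc diff_Suc_1)
    have "\<And>c. \<exists>c'. g (u @ [c]) = u @ [c']" using tree_aut_last_letter[OF g u] fix_n[of u] u by simp
    then obtain c0 c1 where c0: "g (u @ [False]) = u @ [c0]" and c1: "g (u @ [True]) = u @ [c1]"
      by blast
    have "g (u @ [True]) \<noteq> g (u @ [False])"
      using tree_aut_bij[OF g] by (auto simp: bij_def dest: injD)
    then have "c1 = (\<not> c0)" using c0 c1 by auto
    then show ?thesis using w u c0 c1 by (cases b; cases c0) (auto simp: flip_def)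
  qed
qed

lemma tree_aut_comp_flip:
  assumes g: "tree_aut (Suc n) g" and S: "\<And>u. u \<in> S \<Longrightarrow> length u = n"
  shows "g \<circ> flip n S = flip n (g ` S) \<circ> g"
proof (rule ext)
  fix w :: "bool list"
  have inj: "inj g" using tree_aut_bij[OF g] bij_def by blast
  show "(g \<circ> flip n S) w = (flip n (g ` S) \<circ> g) w"
  proof (cases "length w = Suc n")
    case False
    then show ?thesis by (simp add: flip_def tree_aut_length[OF g])
  next
    case True
    obtain u b where w: "w = u @ [b]" and u: "length u = n"
      using True by (metis append_butlast_last_id length_butlast length_greater_0_conv zero_less_Suc diff_Suc_1)
    obtain c0 c1 where c0: "g (u @ [b]) = g u @ [c0]" and c1: "g (u @ [\<not> b]) = g u @ [c1]"
      using tree_aut_last_letter[OF g u] by meson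
    have "g (u @ [\<not> b]) \<noteq> g (u @ [b])" using inj by (auto dest: injD)
    then have "c1 = (\<not> c0)" using c0 c1 by auto
    moreover have "g u \<in> g ` S \<longleftrightarrow> u \<in> S" using inj by (auto dest: injD)
    ultimately show ?thesis using w u c0 c1 tree_aut_length[OF g, of u] S by (auto simp: flip_def)
  qed
qed

section \<open>Automorphisms given by their portraits\<close>

text \<open>The automorphism with portrait \<open>f\<close> swaps the two subtrees below the vertex \<open>q\<close>
  iff \<open>f q\<close>; \<open>portrait_act f p w\<close> is the image of \<open>p @ w\<close> with the prefix \<open>p\<close> removed.\<close>

fun portrait_act :: "(bool list \<Rightarrow> bool) \<Rightarrow> bool list \<Rightarrow> bool list \<Rightarrow> bool list" where
  "portrait_act f p [] = []"
| "portrait_act f p (b # w) = (b \<noteq> f p) # portrait_act f (p @ [b]) w"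

fun portrait_unact :: "(bool list \<Rightarrow> bool) \<Rightarrow> bool list \<Rightarrow> bool list \<Rightarrow> bool list" where
  "portrait_unact f p [] = []"
| "portrait_unact f p (c # w) = (c \<noteq> f p) # portrait_unact f (p @ [c \<noteq> f p]) w"

lemma length_portrait_act [simp]: "length (portrait_act f p w) = length w"
  by (induction w arbitrary: p) auto

lemma length_portrait_unact [simp]: "length (portrait_unact f p w) = length w"
  by (induction w arbitrary: p) auto

lemma portrait_act_unact: "portrait_act f p (portrait_unact f p w) = w"
  by (induction w arbitrary: p) auto

lemma portrait_unact_act: "portrait_unact f p (portrait_act f p w) = w"
proof (induction w arbitrary: p)
  case (Cons b w)
  have "((b \<noteq> f p) \<noteq> f p) = b" by auto
  then show ?case using Cons by simp
qed simp

lemma portrait_act_append: "portrait_act f p (w @ v) = portrait_act f p w @ portrait_act f (p @ w) v"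
  by (induction w arbitrary: p) auto

lemma nth_portrait_act: "i < length w \<Longrightarrow> portrait_act f p w ! i = (w ! i \<noteq> f (p @ take i w))"
proof (induction w arbitrary: p i)
  case (Cons b w)
  then show ?case by (cases i) auto
qed simp

lemma portrait_act_eqI:
  assumes "length u' = length u" and "\<And>i. i < length u \<Longrightarrow> f (take i u) = (u ! i \<noteq> u' ! i)"
  shows "portrait_act f [] u = u'"
  using assms by (intro nth_equalityI) (auto simp: nth_portrait_act)

definition portrait_aut :: "nat \<Rightarrow> (bool list \<Rightarrow> bool) \<Rightarrow> bool list \<Rightarrow> bool list" where
  "portrait_aut n f w = (if length w \<le> n then portrait_act f [] w else w)"

lemma tree_aut_portrait_aut: "tree_aut n (portrait_aut n f)"
  unfolding tree_aut_def
proof (intro conjI allI impI)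
  let ?u = "\<lambda>w. if length w \<le> n then portrait_unact f [] w else w"
  have "portrait_aut n f \<circ> ?u = id" by (rule ext) (simp add: portrait_aut_def portrait_act_unact)
  moreover have "?u \<circ> portrait_aut n f = id" by (rule ext) (simp add: portrait_aut_def portrait_unact_act)
  ultimately show "bij (portrait_aut n f)" using o_bij by blast
  fix w :: "bool list"
  show "length (portrait_aut n f w) = length w" by (simp add: portrait_aut_def)
  show "n < length w \<Longrightarrow> portrait_aut n f w = w" by (simp add: portrait_aut_def)
  fix v assume "length (w @ v) \<le> n"
  then show "take (length w) (portrait_aut n f (w @ v)) = portrait_aut n f w"
    by (simp add: portrait_aut_def portrait_act_append)
qed

lemma ex_portrait_act:
  assumes "length u' = length u"
  shows "\<exists>f. portrait_act f [] u = u'"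
  using portrait_act_eqI[OF assms, of "\<lambda>q. u ! length q \<noteq> u' ! length q"] by auto

definition diverge_at :: "nat \<Rightarrow> bool list \<Rightarrow> bool list \<Rightarrow> bool" where
  "diverge_at k u v \<longleftrightarrow> take k u = take k v \<and> u ! k \<noteq> v ! k"

lemma ex_portrait_act_pair:
  assumes len: "length u = n" "length v = n" "length u' = n" "length v' = n"
    and k: "k < n" and uv: "diverge_at k u v" and uv': "diverge_at k u' v'"
  shows "\<exists>f. portrait_act f [] u = u' \<and> portrait_act f [] v = v'"
proof -
  define f where "f q = (if q = take (length q) u then u ! length q \<noteq> u' ! length q
                         else v ! length q \<noteq> v' ! length q)" for q
  have "portrait_act f [] u = u'"
    by (rule portrait_act_eqI) (auto simp: len f_def)
  moreover have "portrait_act f [] v = v'"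
  proof (rule portrait_act_eqI)
    fix i assume i: "i < length v"
    show "f (take i v) = (v ! i \<noteq> v' ! i)"
    proof (cases "take i v = take i u")
      case True
      have "i \<le> k"
      proof (rule ccontr)
        assume "\<not> i \<le> k"
        then have "v ! k = u ! k" using arg_cong[OF True, of "\<lambda>w. w ! k"] by simp
        then show False using uv by (simp add: diverge_at_def)
      qed
      then have "(u ! i \<noteq> u' ! i) = (v ! i \<noteq> v' ! i)"
        using uv uv' unfolding diverge_at_def by (metis le_neq_implies_less nth_take)
      then show ?thesis using True i len by (simp add: f_def)
    qed (use i len in \<open>simp add: f_def\<close>)
  qed (use len in simp)
  ultimately show ?thesis by blast
qed

section \<open>The generators and their commutators\<close>

lemma a_eq_list_update: "a d i w = (if i < length w \<and> length w \<le> d \<and> take i w = replicate i False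
    then w[i := \<not> w ! i] else w)"
  by (simp add: a_def upd_conv_take_nth_drop)

lemma length_a [simp]: "length (a d i w) = length w"
  by (simp add: a_eq_list_update)

lemma a_involution: "a d i \<circ> a d i = id"
  by (rule ext) (auto simp add: a_eq_list_update)

lemma tree_aut_a: "tree_aut d (a d i)"
  unfolding tree_aut_def
proof (intro conjI allI impI)
  show "bij (a d i)" using a_involution o_bij by blast
  fix w :: "bool list"
  show "length (a d i w) = length w" by simp
  show "d < length w \<Longrightarrow> a d i w = w" by (simp add: a_eq_list_update)
  fix v assume l: "length (w @ v) \<le> d"
  show "take (length w) (a d i (w @ v)) = a d i w"
  proof (cases "i < length w")
    case True
    then show ?thesis using l by (simp add: a_eq_list_update nth_append list_update_append)
  next
    case False
    then have "take (length w) (a d i (w @ v)) = take (length w) (take i (a d i (w @ v)))"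
      by (simp add: min_def)
    also have "\<dots> = w" using False by (simp add: a_eq_list_update min_def)
    finally show ?thesis using False by (simp add: a_eq_list_update)
  qed
qed

lemma a_last_level: "a (Suc n) n = flip n {replicate n False}"
proof (rule ext)
  fix w :: "bool list"
  show "a (Suc n) n w = flip n {replicate n False} w"
  proof (cases "length w = Suc n")
    case True
    then have "take n w = butlast w" "w ! n = last w" "drop (Suc n) w = []"
      by (cases w rule: rev_cases; simp add: nth_append)+
    then show ?thesis using True by (simp add: a_def flip_def)
  qed (auto simp: a_def flip_def)
qed

lemma comm_a_last:
  assumes i: "i < n"
  shows "comm (Suc n) (a (Suc n) i) (a (Suc n) n)
       = flip n {replicate i False @ [True] @ replicate (n - Suc i) False, replicate n False}"
proof -
  let ?x = "replicate n False"
  let ?y = "replicate i False @ [True] @ replicate (n - Suc i) False"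
  have "a (Suc n) i ?x = ?y" using i by (simp add: a_def min_def)
  then have conj: "a (Suc n) i \<circ> flip n {?x} = flip n {?y} \<circ> a (Suc n) i"
    using tree_aut_comp_flip[OF tree_aut_a, where S = "{?x}"] by simp
  have "?y ! i \<noteq> ?x ! i" using i by (simp add: nth_append)
  then have sd: "sym_diff {?y} {?x} = {?y, ?x}" by auto
  have "comm (Suc n) (a (Suc n) i) (a (Suc n) n)
      = a (Suc n) i \<circ> flip n {?x} \<circ> a (Suc n) i \<circ> flip n {?x}"
    by (simp add: comm_def inv_G_involution[OF tree_aut_a a_involution]
        inv_G_involution[OF tree_aut_flip flip_involution] a_last_level)
  also have "\<dots> = flip n {?y} \<circ> (a (Suc n) i \<circ> a (Suc n) i) \<circ> flip n {?x}"
    by (simp add: conj comp_assoc)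
  also have "\<dots> = flip n {?y, ?x}" unfolding sd[symmetric] by (simp add: a_involution flip_comp)
  finally show ?thesis .
qed

lemma take_1_eq_iff: "u \<noteq> [] \<Longrightarrow> v \<noteq> [] \<Longrightarrow> take 1 u = take 1 v \<longleftrightarrow> u ! 0 = v ! 0"
  by (cases u; cases v) auto

section \<open>Subgroups mapping onto the previous level\<close>

locale subgroup_onto_level =
  fixes n :: nat and P :: "(bool list \<Rightarrow> bool list) set"
  assumes subgroup: "subgroup P (G (Suc n))"
    and restr_onto: "restr n ` P = carrier (G n)"
begin

abbreviation flip_coset :: "bool list set \<Rightarrow> (bool list \<Rightarrow> bool list) set" where
  "flip_coset S \<equiv> P #>\<^bsub>G (Suc n)\<^esub> flip n S"

lemma tree_aut_P: "p \<in> P \<Longrightarrow> tree_aut (Suc n) p"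
  using subgroup.subset[OF subgroup] by (auto simp: carrier_G)

lemma id_in_P: "id \<in> P"
  using subgroup.one_closed[OF subgroup] by simp

lemma comp_in_P: "p \<in> P \<Longrightarrow> q \<in> P \<Longrightarrow> p \<circ> q \<in> P"
  using subgroup.m_closed[OF subgroup] by fastforce

lemma inv_into_in_P: "p \<in> P \<Longrightarrow> inv_into UNIV p \<in> P"
  using subgroup.m_inv_closed[OF subgroup] inv_G tree_aut_P by metis

lemma flip_sym_diff_in_P: "flip n S \<in> P \<Longrightarrow> flip n T \<in> P \<Longrightarrow> flip n (sym_diff S T) \<in> P"
  using comp_in_P flip_comp by metis

lemma lift_to_P:
  assumes "g \<in> carrier (G n)"
  obtains p where "p \<in> P" and "\<And>w. length w \<le> n \<Longrightarrow> p w = g w"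
proof -
  obtain p where "p \<in> P" "restr n p = g" using assms restr_onto by (metis imageE)
  then show ?thesis using that by (auto simp: restr_def)
qed

text \<open>Conjugation by a lift of \<open>g\<close> to \<open>P\<close>.\<close>

lemma flip_image_in_P:
  assumes g: "g \<in> carrier (G n)" and S: "\<And>u. u \<in> S \<Longrightarrow> length u = n" and flip: "flip n S \<in> P"
  shows "flip n (g ` S) \<in> P"
proof -
  obtain p where p: "p \<in> P" and pg: "\<And>w. length w \<le> n \<Longrightarrow> p w = g w"
    using lift_to_P[OF g] by blast
  have p_aut: "tree_aut (Suc n) p" using tree_aut_P[OF p] .
  have "p \<circ> inv_into UNIV p = id" using tree_aut_bij[OF p_aut] by (simp add: bij_def surj_iff)
  then have "p \<circ> flip n S \<circ> inv_into UNIV p = flip n (p ` S)"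
    using tree_aut_comp_flip[OF p_aut S] by (metis comp_assoc comp_id)
  moreover have "p \<circ> flip n S \<circ> inv_into UNIV p \<in> P"
    using comp_in_P inv_into_in_P p flip by metis
  moreover have "p ` S = g ` S" using pg S by (auto intro: image_cong)
  ultimately show ?thesis by simp
qed

lemma flip_pair_transport:
  assumes P: "flip n {u, v} \<in> P"
    and len: "length u = n" "length v = n" "length u' = n" "length v' = n"
    and "k < n" "diverge_at k u v" "diverge_at k u' v'"
  shows "flip n {u', v'} \<in> P"
proof -
  obtain f where "portrait_act f [] u = u'" "portrait_act f [] v = v'"
    using ex_portrait_act_pair assms(2-) by blast
  then have "portrait_aut n f ` {u, v} = {u', v'}" using len by (simp add: portrait_aut_def)
  moreover have "flip n (portrait_aut n f ` {u, v}) \<in> P"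
    by (rule flip_image_in_P) (use P len in \<open>auto simp: carrier_G tree_aut_portrait_aut\<close>)
  ultimately show ?thesis by simp
qed

lemma flip_singleton_notin_P:
  assumes notin: "flip n {x, x'} \<notin> P" and "x \<noteq> x'"
    and len: "length x = n" "length x' = n" "length u = n"
  shows "flip n {u} \<notin> P"
proof
  assume u: "flip n {u} \<in> P"
  have "flip n {z} \<in> P" if z: "length z = n" for z
  proof -
    obtain f where "portrait_act f [] u = z" using ex_portrait_act[of z u] z len by auto
    then have "portrait_aut n f ` {u} = {z}" using len by (simp add: portrait_aut_def)
    moreover have "flip n (portrait_aut n f ` {u}) \<in> P"
      by (rule flip_image_in_P) (use u len in \<open>auto simp: carrier_G tree_aut_portrait_aut\<close>)
    ultimately show ?thesis by simp
  qed
  then have "flip n (sym_diff {x} {x'}) \<in> P" using flip_sym_diff_in_P len by blast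
  moreover have "sym_diff {x} {x'} = {x, x'}" using \<open>x \<noteq> x'\<close> by auto
  ultimately show False using notin by simp
qed

text \<open>A pair \<open>{u, v}\<close> whose letters at position \<open>k\<close> agree is linked by the flips of the
  two pairs \<open>{u, w}\<close> and \<open>{w, v}\<close>, both diverging at \<open>k\<close>.\<close>

lemma flip_pair_in_P:
  assumes P: "flip n {u0, v0} \<in> P" and len0: "length u0 = n" "length v0 = n"
    and k: "k < n" and uv0: "diverge_at k u0 v0"
    and len: "length u = n" "length v = n" and "u \<noteq> v" and take: "take k u = take k v"
  shows "flip n {u, v} \<in> P"
proof (cases "u ! k = v ! k")
  case False
  then show ?thesis
    using flip_pair_transport[OF P len0 len k uv0] take by (simp add: diverge_at_def)
next
  case True
  define w where "w = take k u @ [\<not> u ! k] @ replicate (n - Suc k) False"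
  have lw: "length w = n" using k len by (simp add: w_def)
  have wk: "take k w = take k u" "w ! k = (\<not> u ! k)" using k len by (simp_all add: w_def nth_append)
  have "flip n {u, w} \<in> P" "flip n {w, v} \<in> P"
    using flip_pair_transport[OF P len0 _ lw k uv0] flip_pair_transport[OF P len0 lw _ k uv0]
      len wk take True by (simp_all add: diverge_at_def)
  moreover have "sym_diff {u, w} {w, v} = {u, v}"
    using wk True \<open>u \<noteq> v\<close> by auto
  ultimately show ?thesis using flip_sym_diff_in_P by metis
qed

lemma rcoset_eq_flip_coset:
  assumes g: "g \<in> carrier (G (Suc n))"
  obtains S where "S \<subseteq> {u. length u = n}" and "P #>\<^bsub>G (Suc n)\<^esub> g = flip_coset S"
proof -
  have g_aut: "tree_aut (Suc n) g" using g by (simp add: carrier_G)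
  have "restr n g \<in> carrier (G n)" using tree_aut_restr[OF g_aut] by (simp add: carrier_G)
  then obtain p where p: "p \<in> P" and "\<And>w. length w \<le> n \<Longrightarrow> p w = restr n g w"
    using lift_to_P by blast
  then have pg: "\<And>w. length w \<le> n \<Longrightarrow> p w = g w" by (simp add: restr_def)
  have p_aut: "tree_aut (Suc n) p" using tree_aut_P[OF p] .
  define k where "k = inv_into UNIV p \<circ> g"
  have k_aut: "tree_aut (Suc n) k"
    unfolding k_def by (rule tree_aut_comp[OF tree_aut_inv_into[OF p_aut] g_aut])
  have k_fixes: "k w = w" if "length w \<le> n" for w
    using tree_aut_bij[OF p_aut] by (simp add: k_def pg[OF that, symmetric] bij_def)
  define S where "S = {u. length u = n \<and> k (u @ [False]) = u @ [True]}"
  have kS: "k = flip n S" unfolding S_def by (rule tree_aut_eq_flip[OF k_aut k_fixes])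
  have "p \<circ> inv_into UNIV p = id" using tree_aut_bij[OF p_aut] by (simp add: bij_def surj_iff)
  then have g: "g = p \<otimes>\<^bsub>G (Suc n)\<^esub> k" unfolding k_def mult_G by (metis comp_assoc id_comp)
  have p_in: "p \<in> carrier (G (Suc n))" and k_in: "k \<in> carrier (G (Suc n))"
    using p_aut k_aut by (simp_all add: carrier_G)
  have "P #>\<^bsub>G (Suc n)\<^esub> g = (P #>\<^bsub>G (Suc n)\<^esub> p) #>\<^bsub>G (Suc n)\<^esub> k"
    unfolding g by (rule group.coset_mult_assoc[OF group_G subgroup.subset[OF subgroup] p_in k_in, symmetric])
  also have "P #>\<^bsub>G (Suc n)\<^esub> p = P"
    by (rule group.coset_join2[OF group_G p_in subgroup p])
  finally have "P #>\<^bsub>G (Suc n)\<^esub> g = flip_coset S" by (simp only: kS)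
  moreover have "S \<subseteq> {u. length u = n}" unfolding S_def by blast
  ultimately show ?thesis by (rule that[rotated])
qed

lemma flip_coset_eq_iff: "flip_coset S = flip_coset T \<longleftrightarrow> flip n (sym_diff S T) \<in> P"
proof -
  have S: "flip n S \<in> carrier (G (Suc n))" and T: "flip n T \<in> carrier (G (Suc n))"
    by (simp_all add: carrier_G tree_aut_flip)
  have "flip_coset S = flip_coset T \<longleftrightarrow> flip n S \<in> flip_coset T"
  proof
    show "flip_coset S = flip_coset T \<Longrightarrow> flip n S \<in> flip_coset T"
      using group.repr_independenceD[OF group_G subgroup S] by simp
    show "flip n S \<in> flip_coset T \<Longrightarrow> flip_coset S = flip_coset T"
      using group.repr_independence[OF group_G _ T subgroup] by simp
  qed
  also have "\<dots> \<longleftrightarrow> flip n S \<otimes>\<^bsub>G (Suc n)\<^esub> inv\<^bsub>G (Suc n)\<^esub> flip n T \<in> P"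
    by (rule subgroup.rcos_module[OF subgroup group_G T S])
  also have "flip n S \<otimes>\<^bsub>G (Suc n)\<^esub> inv\<^bsub>G (Suc n)\<^esub> flip n T = flip n (sym_diff S T)"
    by (simp add: inv_G_involution[OF tree_aut_flip flip_involution] flip_comp)
  finally show ?thesis .
qed

lemma flip_coset_in_rcosets: "flip_coset S \<in> rcosets\<^bsub>G (Suc n)\<^esub> P"
  by (rule group.rcosetsI[OF group_G subgroup.subset[OF subgroup]]) (simp add: carrier_G tree_aut_flip)

lemma inj_on_flip_coset:
  assumes "\<And>S T. S \<in> Rs \<Longrightarrow> T \<in> Rs \<Longrightarrow> S \<noteq> T \<Longrightarrow> flip n (sym_diff S T) \<notin> P"
  shows "inj_on flip_coset Rs"
  by (rule inj_onI) (use assms flip_coset_eq_iff in blast)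

lemma rcosets_subset_flip_cosets:
  assumes r: "\<And>z. length z = n \<Longrightarrow> r z \<in> Z \<and> flip n (sym_diff {z} {r z}) \<in> P"
  shows "rcosets\<^bsub>G (Suc n)\<^esub> P \<subseteq> flip_coset ` Pow Z"
proof
  have reduce: "\<exists>R \<subseteq> Z. flip n (sym_diff S R) \<in> P"
    if "finite S" "S \<subseteq> {u. length u = n}" for S
    using that
  proof (induction S rule: finite_induct)
    case empty
    then show ?case using id_in_P flip_empty by auto
  next
    case (insert z S)
    then obtain R where R: "R \<subseteq> Z" "flip n (sym_diff S R) \<in> P" by auto
    have "length z = n" using insert by auto
    then have "sym_diff R {r z} \<subseteq> Z" "flip n (sym_diff (sym_diff S R) (sym_diff {z} {r z})) \<in> P"
      using r R flip_sym_diff_in_P by auto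
    moreover have "sym_diff (sym_diff S R) (sym_diff {z} {r z}) = sym_diff (insert z S) (sym_diff R {r z})"
      using insert(2) by auto
    ultimately show ?case by (intro exI[of _ "sym_diff R {r z}"]) simp
  qed
  fix C assume "C \<in> rcosets\<^bsub>G (Suc n)\<^esub> P"
  then obtain g where "g \<in> carrier (G (Suc n))" "C = P #>\<^bsub>G (Suc n)\<^esub> g"
    by (auto simp: RCOSETS_def)
  then obtain S where S: "S \<subseteq> {u. length u = n}" "C = flip_coset S"
    using rcoset_eq_flip_coset by metis
  moreover have "finite S"
    using S(1) finite_lists_length_eq[of "UNIV :: bool set" n] finite_subset by auto
  ultimately obtain R where "R \<subseteq> Z" "flip n (sym_diff S R) \<in> P" using reduce by blast
  then show "C \<in> flip_coset ` Pow Z" using S(2) flip_coset_eq_iff by blast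
qed

lemma card_rcosets_le:
  assumes "finite Z" and "\<And>z. length z = n \<Longrightarrow> r z \<in> Z \<and> flip n (sym_diff {z} {r z}) \<in> P"
  shows "card (rcosets\<^bsub>G (Suc n)\<^esub> P) \<le> 2 ^ card Z"
proof -
  have "card (rcosets\<^bsub>G (Suc n)\<^esub> P) \<le> card (flip_coset ` Pow Z)"
    using rcosets_subset_flip_cosets[OF assms(2)] \<open>finite Z\<close> by (simp add: card_mono)
  also have "\<dots> \<le> 2 ^ card Z" using card_image_le[of "Pow Z" flip_coset] \<open>finite Z\<close> by (simp add: card_Pow)
  finally show ?thesis .
qed

lemma finite_rcosets: "finite (rcosets\<^bsub>G (Suc n)\<^esub> P)"
proof -
  have "rcosets\<^bsub>G (Suc n)\<^esub> P \<subseteq> flip_coset ` Pow {u. length u = n}"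
    by (rule rcosets_subset_flip_cosets[where r = id]) (simp add: id_in_P flip_empty)
  moreover have "finite {u :: bool list. length u = n}"
    using finite_lists_length_eq[of "UNIV :: bool set" n] by simp
  ultimately show ?thesis by (meson finite_Pow_iff finite_imageI finite_subset)
qed

lemma card_rcosets_gt:
  assumes "finite Z"
    and singletons: "\<And>z. z \<in> Z \<Longrightarrow> flip n {z} \<notin> P"
    and pairs: "\<And>z z'. z \<in> Z \<Longrightarrow> z' \<in> Z \<Longrightarrow> z \<noteq> z' \<Longrightarrow> flip n {z, z'} \<notin> P"
  shows "card Z < card (rcosets\<^bsub>G (Suc n)\<^esub> P)"
proof -
  let ?Rs = "insert {} ((\<lambda>z. {z}) ` Z)"
  have inj: "inj_on flip_coset ?Rs"
  proof (rule inj_on_flip_coset)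
    fix S T assume "S \<in> ?Rs" "T \<in> ?Rs" "S \<noteq> T"
    then show "flip n (sym_diff S T) \<notin> P"
      using singletons pairs by (auto simp: Un_commute)
  qed
  have "card (flip_coset ` ?Rs) = card ?Rs" by (rule card_image[OF inj])
  also have "\<dots> = Suc (card Z)"
    using \<open>finite Z\<close> by (subst card_insert_disjoint) (auto simp: card_image inj_on_def)
  finally have "card (flip_coset ` ?Rs) = Suc (card Z)" .
  moreover have "flip_coset ` ?Rs \<subseteq> rcosets\<^bsub>G (Suc n)\<^esub> P"
    using flip_coset_in_rcosets by blast
  ultimately show ?thesis using card_mono[OF finite_rcosets] by (metis Suc_le_eq)
qed

section \<open>The index of \<open>P\<close>\<close>

lemma card_rcosets_le_2:
  assumes P: "flip n {x, x'} \<in> P" and len: "length x = n" "length x' = n"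
    and n: "0 < n" and x0: "x ! 0 \<noteq> x' ! 0"
  shows "card (rcosets\<^bsub>G (Suc n)\<^esub> P) \<le> 2"
proof -
  have "flip n (sym_diff {z} {x}) \<in> P" if z: "length z = n" for z
  proof (cases "z = x")
    case False
    then have "flip n {z, x} \<in> P"
      using flip_pair_in_P[OF P len n] x0 z len by (simp add: diverge_at_def)
    then show ?thesis using False by (simp add: insert_Diff_if insert_commute)
  qed (simp add: id_in_P flip_empty)
  then show ?thesis using card_rcosets_le[of "{x}" "\<lambda>_. x"] by simp
qed

lemma card_rcosets_eq_4:
  assumes notin: "flip n {x, x'} \<notin> P" and len: "length x = n" "length x' = n"
    and n: "0 < n" and x0: "x ! 0 \<noteq> x' ! 0"
    and halves: "\<And>u v. length u = n \<Longrightarrow> length v = n \<Longrightarrow> u \<noteq> v \<Longrightarrow> take 1 u = take 1 v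
      \<Longrightarrow> flip n {u, v} \<in> P"
  shows "card (rcosets\<^bsub>G (Suc n)\<^esub> P) = 4"
proof -
  have "x \<noteq> x'" using x0 by auto
  define r where "r z = (if z ! 0 = x ! 0 then x else x')" for z :: "bool list"
  have r: "r z \<in> {x, x'} \<and> flip n (sym_diff {z} {r z}) \<in> P" if z: "length z = n" for z
  proof -
    have "flip n (sym_diff {z} {r z}) \<in> P"
    proof (cases "z = r z")
      case True
      then have "sym_diff {z} {r z} = {}" by auto
      then show ?thesis by (simp add: id_in_P flip_empty)
    next
      case False
      have "z ! 0 = r z ! 0" using x0 by (auto simp: r_def)
      moreover have "z \<noteq> []" "r z \<noteq> []" using z len n by (auto simp: r_def)
      ultimately have "take 1 z = take 1 (r z)" using take_1_eq_iff by blast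
      then have "flip n {z, r z} \<in> P" using halves z len False by (simp add: r_def)
      moreover have "sym_diff {z} {r z} = {z, r z}" using False by auto
      ultimately show ?thesis by simp
    qed
    then show ?thesis by (simp add: r_def)
  qed
  have "rcosets\<^bsub>G (Suc n)\<^esub> P = flip_coset ` Pow {x, x'}"
    using rcosets_subset_flip_cosets[OF r] flip_coset_in_rcosets by blast
  moreover have "inj_on flip_coset (Pow {x, x'})"
  proof (rule inj_on_flip_coset)
    fix S T assume "S \<in> Pow {x, x'}" "T \<in> Pow {x, x'}" "S \<noteq> T"
    then have "sym_diff S T \<in> {{x}, {x'}, {x, x'}}" by auto
    then show "flip n (sym_diff S T) \<notin> P"
      using notin flip_singleton_notin_P[OF notin \<open>x \<noteq> x'\<close> len] len by auto
  qed
  ultimately show ?thesis using \<open>x \<noteq> x'\<close> by (simp add: card_image card_Pow)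
qed

lemma card_rcosets_ge_5:
  assumes notin: "flip n {x, x'} \<notin> P" and len: "length x = n" "length x' = n"
    and n: "0 < n" and x0: "x ! 0 \<noteq> x' ! 0"
    and uv: "length u = n" "length v = n" "u \<noteq> v" "take 1 u = take 1 v" "flip n {u, v} \<notin> P"
  shows "5 \<le> card (rcosets\<^bsub>G (Suc n)\<^esub> P)"
proof -
  have "x \<noteq> x'" using x0 by auto
  let ?\<sigma> = "a n 0"
  have \<sigma>: "?\<sigma> \<in> carrier (G n)" by (simp add: carrier_G tree_aut_a)
  have \<sigma>_eq: "?\<sigma> w = w[0 := \<not> w ! 0]" if "length w = n" for w
    using that n by (simp add: a_eq_list_update)
  have across: "flip n {w, w'} \<notin> P" if "length w = n" "length w' = n" "w ! 0 \<noteq> w' ! 0" for w w'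
  proof
    assume "flip n {w, w'} \<in> P"
    then have "flip n {x, x'} \<in> P"
      using flip_pair_in_P[OF _ that(1,2) n _ len] that(3) x0 by (auto simp: diverge_at_def)
    then show False using notin by simp
  qed
  have "flip n {?\<sigma> u, ?\<sigma> v} \<notin> P"
  proof
    assume "flip n {?\<sigma> u, ?\<sigma> v} \<in> P"
    then have "flip n (?\<sigma> ` {?\<sigma> u, ?\<sigma> v}) \<in> P"
      by (intro flip_image_in_P[OF \<sigma>]) (use uv in auto)
    then show False using uv(5) by (simp add: pointfree_idE[OF a_involution])
  qed
  moreover have "u ! 0 = v ! 0" using arg_cong[OF uv(4), of "\<lambda>w. w ! 0"] uv n by simp
  ultimately have pairs: "flip n {z, z'} \<notin> P"
    if "z \<in> {u, v, ?\<sigma> u, ?\<sigma> v}" "z' \<in> {u, v, ?\<sigma> u, ?\<sigma> v}" "z \<noteq> z'" for z z'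
    using that uv n across[of u "?\<sigma> u"] across[of u "?\<sigma> v"] across[of v "?\<sigma> u"] across[of v "?\<sigma> v"]
    by (auto simp: \<sigma>_eq insert_commute)
  have "u \<noteq> ?\<sigma> u" "u \<noteq> ?\<sigma> v" "v \<noteq> ?\<sigma> u" "v \<noteq> ?\<sigma> v"
    using \<open>u ! 0 = v ! 0\<close> uv n by (auto simp: \<sigma>_eq dest: arg_cong[where f = "\<lambda>w. w ! 0"])
  moreover have "?\<sigma> u \<noteq> ?\<sigma> v" using uv(3) by (metis pointfree_idE[OF a_involution])
  ultimately have "card {u, v, ?\<sigma> u, ?\<sigma> v} = 4" using uv(3) by simp
  moreover have "card {u, v, ?\<sigma> u, ?\<sigma> v} < card (rcosets\<^bsub>G (Suc n)\<^esub> P)"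
    by (rule card_rcosets_gt)
      (use pairs flip_singleton_notin_P[OF notin \<open>x \<noteq> x'\<close> len] uv \<sigma>_eq in auto)
  ultimately show ?thesis by simp
qed

lemma card_rcosets_eq_4_iff:
  assumes len: "length x = n" "length x' = n" and n: "0 < n" and x0: "x ! 0 \<noteq> x' ! 0"
  shows "card (rcosets\<^bsub>G (Suc n)\<^esub> P) = 4 \<longleftrightarrow> flip n {x, x'} \<notin> P \<and>
    (\<forall>u v. length u = n \<longrightarrow> length v = n \<longrightarrow> u \<noteq> v \<longrightarrow> take 1 u = take 1 v \<longrightarrow> flip n {u, v} \<in> P)"
proof
  assume card: "card (rcosets\<^bsub>G (Suc n)\<^esub> P) = 4"
  then have notin: "flip n {x, x'} \<notin> P" using card_rcosets_le_2[OF _ len n x0] by fastforce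
  then show "flip n {x, x'} \<notin> P \<and>
    (\<forall>u v. length u = n \<longrightarrow> length v = n \<longrightarrow> u \<noteq> v \<longrightarrow> take 1 u = take 1 v \<longrightarrow> flip n {u, v} \<in> P)"
    using card_rcosets_ge_5[OF notin len n x0] card by fastforce
qed (use card_rcosets_eq_4[OF _ len n x0] in blast)

lemma comm_a_1_in_P_iff:
  assumes n: "0 < n"
  shows "comm (Suc n) (a (Suc n) 1) (a (Suc n) n) \<in> P \<longleftrightarrow>
    (\<forall>u v. length u = n \<longrightarrow> length v = n \<longrightarrow> u \<noteq> v \<longrightarrow> take 1 u = take 1 v \<longrightarrow> flip n {u, v} \<in> P)"
proof (cases "n = 1")
  case True
  then have "comm (Suc n) (a (Suc n) 1) (a (Suc n) n) = id" by (simp add: comm_self tree_aut_a)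
  moreover have "u = v" if "length u = 1" "length v = 1" "take 1 u = take 1 v" for u v :: "bool list"
    using that by simp
  ultimately show ?thesis using True id_in_P by auto
next
  case False
  then obtain m where m: "n = Suc (Suc m)" using n by (cases n; cases "n - 1") auto
  define x where "x = replicate n False"
  define y where "y = False # True # replicate m False"
  have len: "length x = n" "length y = n" and "1 < n" by (simp_all add: m x_def y_def)
  have "comm (Suc n) (a (Suc n) 1) (a (Suc n) n) = flip n {y, x}"
    using comm_a_last[OF \<open>1 < n\<close>] by (simp add: m x_def y_def)
  moreover have "diverge_at 1 y x" "y \<noteq> x" "take 1 y = take 1 x"
    by (simp_all add: m diverge_at_def x_def y_def)
  ultimately show ?thesis using flip_pair_in_P[OF _ len(2,1) \<open>1 < n\<close>] len by auto
qed

end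

theorem mainTheorem15:
  fixes d :: nat and P :: "(bool list \<Rightarrow> bool list) set"
  assumes "d \<ge> 2"
    and "essential_pattern d P"
    and "restr (d - 1) ` P = carrier (G (d - 1))"
  shows "(comm d (a d 1) (a d (d - 1)) \<in> P \<and> comm d (a d 0) (a d (d - 1)) \<notin> P)
         \<longleftrightarrow> tree_index d P = 4"
proof -
  obtain n where d: "d = Suc n" and n: "0 < n" using assms(1) by (cases d) auto
  interpret subgroup_onto_level n P
    using assms(2,3) d unfolding subgroup_onto_level_def essential_pattern_def by simp
  define x where "x = replicate n False"
  define x' where "x' = True # replicate (n - 1) False"
  have x: "length x = n" "length x' = n" "x ! 0 \<noteq> x' ! 0" using n by (simp_all add: x_def x'_def)
  have "comm d (a d 0) (a d (d - 1)) = flip n {x, x'}"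
    using comm_a_last[OF n] d by (simp add: x_def x'_def insert_commute)
  then show ?thesis
    using comm_a_1_in_P_iff[OF n] card_rcosets_eq_4_iff[OF x(1,2) n x(3)] d by (auto simp: tree_index_def)
qed

end
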